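(* Let $p\ge 4$ and let $\Sigma\in\mathbb{R}^{p\times p}$ be positive definite. Then $\Sigma\in F_{p,1}\setminus F_{p,0}$ if and only if every $4\times 4$ principal submatrix of $\Sigma$ belongs to $F_{4,1}$ and at least one $2\times 2$ principal submatrix of $\Sigma$ does not belong to $F_{2,0}$.
   Context: For integers $p\ge 1$, $m\ge 1$, $F_{p,m}=\{\Delta+\Gamma\Gamma^t : \Delta \text{ a positive definite diagonal } p\times p \text{ matrix},\ \Gamma\in\mathbb{R}^{p\times m}\}$. $F_{p,0}$ is the set of positive definite diagonal $p\times p$ matrices. *)

theory Defs
  imports Complex_Main
begin

text \<open>A p x p real matrix is represented as a function nat => nat => real;
only the entries with indices in {0..<p} are relevant.\<close>

definition is_symm :: "nat \<Rightarrow> (nat \<Rightarrow> nat \<Rightarrow> real) \<Rightarrow> bool" where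
  "is_symm p M \<longleftrightarrow> (\<forall>i<p. \<forall>j<p. M i j = M j i)"

definition pos_def :: "nat \<Rightarrow> (nat \<Rightarrow> nat \<Rightarrow> real) \<Rightarrow> bool" where
  "pos_def p M \<longleftrightarrow> is_symm p M \<and>
     (\<forall>x :: nat \<Rightarrow> real. (\<exists>i<p. x i \<noteq> 0) \<longrightarrow>
        (\<Sum>i<p. \<Sum>j<p. x i * M i j * x j) > 0)"

definition is_diag :: "nat \<Rightarrow> (nat \<Rightarrow> nat \<Rightarrow> real) \<Rightarrow> bool" where
  "is_diag p M \<longleftrightarrow> (\<forall>i<p. \<forall>j<p. i \<noteq> j \<longrightarrow> M i j = 0)"

definition F0 :: "nat \<Rightarrow> (nat \<Rightarrow> nat \<Rightarrow> real) \<Rightarrow> bool" where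
  "F0 p M \<longleftrightarrow> is_diag p M \<and> pos_def p M"

definition Fpm :: "nat \<Rightarrow> nat \<Rightarrow> (nat \<Rightarrow> nat \<Rightarrow> real) \<Rightarrow> bool" where
  "Fpm p m M \<longleftrightarrow> (\<exists>(D :: nat \<Rightarrow> nat \<Rightarrow> real) (G :: nat \<Rightarrow> nat \<Rightarrow> real).
     is_diag p D \<and> pos_def p D \<and>
     (\<forall>i<p. \<forall>j<p. M i j = D i j + (\<Sum>k<m. G i k * G j k)))"

definition submat :: "(nat \<Rightarrow> nat \<Rightarrow> real) \<Rightarrow> (nat \<Rightarrow> nat) \<Rightarrow> (nat \<Rightarrow> nat \<Rightarrow> real)" where
  "submat M idx = (\<lambda>a b. M (idx a) (idx b))"

definition principal_idx :: "nat \<Rightarrow> nat \<Rightarrow> (nat \<Rightarrow> nat) \<Rightarrow> bool" where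
  "principal_idx p k idx \<longleftrightarrow> strict_mono_on {..<k} idx \<and> (\<forall>a<k. idx a < p)"

end

theory Submission
  imports Defs
begin

(* A matrix S lies in F_{p,1} exactly when it admits a "one-factor pattern" g on
   {0..<p}: S x y = g x * g y off the diagonal and (g x)^2 < S x x on it (take Delta = S - g g^t).
   This pattern notion restricts to principal submatrices and transports along index maps, so
   membership in F_{p,1} passes to all principal submatrices, and conversely the hypothesis on
   4x4 submatrices says that every set of at most four indices carries a one-factor pattern
   ("S is locally one-factor").  The core of the proof glues the local patterns into a global
   one, anchored at an index a with a nonzero off-diagonal entry S a b: with a suitable t > 0
   we put g a = sqrt t and g i = S i a / sqrt t.  If some third index c has S a c <> 0 the value
   t = S a b * S a c / S b c is forced and the required identities follow from the local patterns
   and one tetrad identity; otherwise all off-diagonal entries outside {a,b} vanish and any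
   t strictly between (S a b)^2 / S b b and S a a works.  Finally, a positive definite matrix
   is outside F_{p,0} iff it has a nonzero off-diagonal entry, iff some 2x2 principal submatrix
   is outside F_{2,0}. *)

(* A positive definite matrix has a positive diagonal (test with a unit vector). *)
lemma pos_def_diag_pos:
  assumes "pos_def p M" "i < p" shows "M i i > 0"
proof -
  define x where "x = (\<lambda>k. if k = i then 1 else (0::real))"
  have "\<exists>k<p. x k \<noteq> 0" using assms(2) by (auto simp: x_def)
  then have "(\<Sum>a<p. \<Sum>b<p. x a * M a b * x b) > 0"
    using assms(1) unfolding pos_def_def by blast
  also have "(\<Sum>a<p. \<Sum>b<p. x a * M a b * x b) = M i i"
    using assms(2)
    by (simp add: x_def if_distrib[where f="\<lambda>y. y * _"] if_distrib[where f="\<lambda>y. _ * y"]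
        cong: if_cong)
  finally show ?thesis .
qed

lemma diag_pos_def:
  assumes "is_diag p D" "\<forall>i<p. D i i > 0" shows "pos_def p D"
  unfolding pos_def_def
proof (intro conjI allI impI)
  show "is_symm p D" using assms(1) unfolding is_symm_def is_diag_def by metis
  fix x :: "nat \<Rightarrow> real" assume "\<exists>i<p. x i \<noteq> 0"
  then obtain i where i: "i < p" "x i \<noteq> 0" by blast
  have row: "(\<Sum>b<p. x a * D a b * x b) = D a a * (x a)\<^sup>2" if "a < p" for a
  proof -
    have "(\<Sum>b<p. x a * D a b * x b) = (\<Sum>b<p. if b = a then x a * D a a * x a else 0)"
      by (rule sum.cong) (use assms(1) that in \<open>auto simp: is_diag_def\<close>)
    then show ?thesis using that by (simp add: power2_eq_square mult_ac)
  qed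
  have "0 < (\<Sum>a<p. D a a * (x a)\<^sup>2)"
    by (rule sum_pos2[of _ i]) (use i assms(2) in auto)
  also have "\<dots> = (\<Sum>a<p. \<Sum>b<p. x a * D a b * x b)" using row by simp
  finally show "(\<Sum>a<p. \<Sum>b<p. x a * D a b * x b) > 0" .
qed

lemma F0_iff_diag:
  assumes "\<forall>i<k. M i i > 0" shows "F0 k M \<longleftrightarrow> is_diag k M"
  using diag_pos_def[of k M] assms unfolding F0_def by blast

section \<open>One-factor patterns\<close>

definition one_factor :: "(nat \<Rightarrow> nat \<Rightarrow> real) \<Rightarrow> nat set \<Rightarrow> (nat \<Rightarrow> real) \<Rightarrow> bool" where
  "one_factor S T g \<longleftrightarrow>
     (\<forall>x\<in>T. \<forall>y\<in>T. x \<noteq> y \<longrightarrow> S x y = g x * g y) \<and> (\<forall>x\<in>T. (g x)\<^sup>2 < S x x)"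

lemma Fpm1_iff_one_factor: "Fpm p 1 S \<longleftrightarrow> (\<exists>g. one_factor S {..<p} g)"
proof
  assume "Fpm p 1 S"
  then obtain D G :: "nat \<Rightarrow> nat \<Rightarrow> real" where D: "is_diag p D" "pos_def p D"
    and SDG: "\<And>i j. i < p \<Longrightarrow> j < p \<Longrightarrow> S i j = D i j + G i 0 * G j 0"
    unfolding Fpm_def by auto
  have "S i j = G i 0 * G j 0" if "i < p" "j < p" "i \<noteq> j" for i j
    using SDG[OF that(1,2)] D(1) that unfolding is_diag_def by simp
  moreover have "(G i 0)\<^sup>2 < S i i" if "i < p" for i
    using SDG[OF that that] pos_def_diag_pos[OF D(2) that] by (simp add: power2_eq_square)
  ultimately have "one_factor S {..<p} (\<lambda>i. G i 0)" unfolding one_factor_def by simp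
  then show "\<exists>g. one_factor S {..<p} g" by blast
next
  assume "\<exists>g. one_factor S {..<p} g"
  then obtain g where g: "one_factor S {..<p} g" ..
  define D where "D = (\<lambda>i j. if i = j then S i i - (g i)\<^sup>2 else 0)"
  have diag: "is_diag p D" by (simp add: is_diag_def D_def)
  moreover have "pos_def p D"
    using diag_pos_def[OF diag] g by (simp add: one_factor_def D_def)
  moreover have "S i j = D i j + g i * g j" if "i < p" "j < p" for i j
    using g that by (cases "i = j") (simp_all add: one_factor_def D_def power2_eq_square)
  ultimately show "Fpm p 1 S" unfolding Fpm_def by (intro exI[of _ D] exI[of _ "\<lambda>i k. g i"]) simp
qed

lemma one_factor_subset: "one_factor S T g \<Longrightarrow> U \<subseteq> T \<Longrightarrow> one_factor S U g"
  unfolding one_factor_def by blast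

lemma one_factor_submat:
  assumes "one_factor S (idx ` A) g" "inj_on idx A"
  shows "one_factor (submat S idx) A (g \<circ> idx)"
  using assms unfolding one_factor_def submat_def inj_on_def by auto

lemma one_factor_image:
  assumes "one_factor (submat S idx) A g" "inj_on idx A"
  shows "one_factor S (idx ` A) (g \<circ> inv_into A idx)"
  using assms unfolding one_factor_def submat_def by (auto simp: inv_into_f_f)

lemma principal_idx_inj: "principal_idx p k idx \<Longrightarrow> inj_on idx {..<k}"
  unfolding principal_idx_def by (rule strict_mono_on_imp_inj_on) blast

lemma principal_idx_sorted_list:
  assumes "finite T" "T \<subseteq> {..<p}"
  shows "principal_idx p (card T) ((!) (sorted_list_of_set T))"
    and "(!) (sorted_list_of_set T) ` {..<card T} = T"
proof -
  let ?xs = "sorted_list_of_set T"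
  have len: "length ?xs = card T" and set: "set ?xs = T" using assms(1) by simp_all
  have "strict_mono_on {..<card T} ((!) ?xs)"
    by (rule strict_mono_onI) (use sorted_wrt_nth_less[OF strict_sorted_list_of_set] len in auto)
  then show "principal_idx p (card T) ((!) ?xs)"
    unfolding principal_idx_def using len set assms(2) nth_mem by fastforce
  show "(!) ?xs ` {..<card T} = T" using len set by (auto simp: set_conv_nth)
qed

lemma Fpm1_principal:
  assumes "Fpm p 1 S" "principal_idx p k idx" shows "Fpm k 1 (submat S idx)"
proof -
  obtain g where "one_factor S {..<p} g" using assms(1) Fpm1_iff_one_factor by blast
  moreover have "idx ` {..<k} \<subseteq> {..<p}" using assms(2) unfolding principal_idx_def by auto
  ultimately have "one_factor S (idx ` {..<k}) g" by (rule one_factor_subset)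
  then show ?thesis
    using one_factor_submat principal_idx_inj[OF assms(2)] Fpm1_iff_one_factor by blast
qed

definition locally_one_factor :: "(nat \<Rightarrow> nat \<Rightarrow> real) \<Rightarrow> nat \<Rightarrow> bool" where
  "locally_one_factor S p \<longleftrightarrow> (\<forall>T \<subseteq> {..<p}. card T \<le> 4 \<longrightarrow> (\<exists>g. one_factor S T g))"

(* The hypothesis on 4x4 principal submatrices makes S locally one-factor: a small index set
   is enlarged to exactly four indices (possible as p >= 4), which form a principal submatrix. *)
lemma locally_one_factor_from_principal:
  assumes "p \<ge> 4" and H: "\<forall>idx. principal_idx p 4 idx \<longrightarrow> Fpm 4 1 (submat S idx)"
  shows "locally_one_factor S p"
  unfolding locally_one_factor_def
proof (intro allI impI)
  fix T assume T: "T \<subseteq> {..<p}" "card T \<le> 4"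
  have finT: "finite T" using T(1) finite_subset by blast
  have "4 - card T \<le> card ({..<p} - T)" using T finT assms(1) by (simp add: card_Diff_subset)
  then obtain U where U: "U \<subseteq> {..<p} - T" "card U = 4 - card T" "finite U"
    by (rule obtain_subset_with_card_n)
  define V where "V = T \<union> U"
  have V: "finite V" "V \<subseteq> {..<p}" "card V = 4"
    using U T finT card_Un_disjoint[of T U] by (auto simp: V_def)
  let ?idx = "(!) (sorted_list_of_set V)"
  have "principal_idx p 4 ?idx" using principal_idx_sorted_list(1)[OF V(1,2)] V(3) by simp
  then obtain g where "one_factor (submat S ?idx) {..<4} g"
    using H Fpm1_iff_one_factor by blast
  then have "one_factor S (?idx ` {..<4}) (g \<circ> inv_into {..<4} ?idx)"
    using one_factor_image principal_idx_inj[OF \<open>principal_idx p 4 ?idx\<close>] by blast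
  then have "one_factor S V (g \<circ> inv_into {..<4} ?idx)"
    using principal_idx_sorted_list(2)[OF V(1,2)] V(3) by simp
  then show "\<exists>g. one_factor S T g" using one_factor_subset V_def by blast
qed

lemma locally_one_factor_list:
  assumes "locally_one_factor S p" "set xs \<subseteq> {..<p}" "length xs \<le> 4"
  obtains g where "one_factor S (set xs) g"
  using assms card_length[of xs] unfolding locally_one_factor_def by fastforce

lemma locally_one_factor_symm:
  assumes "locally_one_factor S p" "x < p" "y < p" shows "S x y = S y x"
proof -
  obtain g where "one_factor S {x, y} g"
    using locally_one_factor_list[OF assms(1), of "[x, y]"] assms by auto
  then show ?thesis by (cases "x = y") (auto simp: one_factor_def)
qed

lemma locally_one_factor_diag_pos:
  assumes "locally_one_factor S p" "x < p" shows "S x x > 0"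
proof -
  obtain g where "one_factor S {x} g"
    using locally_one_factor_list[OF assms(1), of "[x]"] assms by auto
  then have "(g x)\<^sup>2 < S x x" by (simp add: one_factor_def)
  then show ?thesis by (smt (verit) zero_le_power2)
qed

lemma locally_one_factor_tetrad:
  assumes "locally_one_factor S p" "w < p" "x < p" "y < p" "z < p" "distinct [w, x, y, z]"
  shows "S w x * S y z = S w y * S x z"
proof -
  obtain g where "one_factor S {w, x, y, z} g"
    using locally_one_factor_list[OF assms(1), of "[w, x, y, z]"] assms by auto
  then show ?thesis using assms(6) by (simp add: one_factor_def mult_ac)
qed

lemma one_factor_square:
  assumes "one_factor S T g" "i \<in> T" "j \<in> T" "a \<in> T" "distinct [i, j, a]"
  shows "S i j * (g a)\<^sup>2 = S i a * S j a"
  using assms by (simp add: one_factor_def power2_eq_square mult_ac)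

section \<open>Gluing local patterns into a global one\<close>

lemma one_factor_anchor:
  assumes sym: "\<And>i. i < p \<Longrightarrow> S a i = S i a" and "t > 0" "t < S a a"
    and prod: "\<And>i j. i < p \<Longrightarrow> j < p \<Longrightarrow> distinct [i, j, a] \<Longrightarrow> S i j * t = S i a * S j a"
    and dom: "\<And>i. i < p \<Longrightarrow> i \<noteq> a \<Longrightarrow> (S i a)\<^sup>2 < S i i * t"
  shows "one_factor S {..<p} (\<lambda>i. if i = a then sqrt t else S i a / sqrt t)"
    (is "one_factor S {..<p} ?g")
proof -
  have st: "sqrt t > 0" "sqrt t * sqrt t = t" using \<open>t > 0\<close> by auto
  have "S i j = ?g i * ?g j" if ij: "i < p" "j < p" "i \<noteq> j" for i j
  proof -
    consider "i = a" | "j = a" | "distinct [i, j, a]" using ij(3) by force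
    then show ?thesis
    proof cases
      case 3
      have "S i j * (sqrt t * sqrt t) = S i a * S j a" using prod[OF ij(1,2) 3] st by simp
      then show ?thesis using 3 st by (simp add: field_simps)
    qed (use ij st sym in auto)
  qed
  moreover have "(?g i)\<^sup>2 < S i i" if "i < p" for i
    using dom[OF that] st \<open>t < S a a\<close> \<open>t > 0\<close> by (auto simp: power_divide divide_less_eq)
  ultimately show ?thesis unfolding one_factor_def by blast
qed

(* First case: a third index c with S a c <> 0 fixes t = S a b * S a c / S b c. *)
lemma global_one_factor_triangle:
  assumes L: "locally_one_factor S p"
    and abc: "a < p" "b < p" "c < p" "distinct [a, b, c]" "S a b \<noteq> 0" "S a c \<noteq> 0"
  shows "\<exists>g. one_factor S {..<p} g"
proof -
  define t where "t = S a b * S a c / S b c"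
  have sym: "\<And>x y. x < p \<Longrightarrow> y < p \<Longrightarrow> S x y = S y x"
    using locally_one_factor_symm[OF L] by blast
  have anchor: "(g a)\<^sup>2 = t" if g: "one_factor S {a, b, c, k} g" for g k
  proof -
    have "S a b = g a * g b" "S a c = g a * g c" "S b c = g b * g c"
      using g abc(4) unfolding one_factor_def by auto
    then show ?thesis using abc(5,6) by (auto simp: t_def power2_eq_square)
  qed
  have quad: "S i j * t = S i a * S j a"
    if k: "k < p" and ij: "i \<in> {a, b, c, k}" "j \<in> {a, b, c, k}" "distinct [i, j, a]" for i j k
  proof -
    obtain g where g: "one_factor S {a, b, c, k} g"
      using locally_one_factor_list[OF L, of "[a, b, c, k]"] abc k by auto
    show ?thesis using anchor[OF g] one_factor_square[OF g ij(1,2) _ ij(3)] by simp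
  qed
  obtain g0 where g0: "one_factor S {a, b, c, a} g0"
    using locally_one_factor_list[OF L, of "[a, b, c, a]"] abc by auto
  have "g0 a * g0 b = S a b" using g0 abc(4) unfolding one_factor_def by auto
  then have "g0 a \<noteq> 0" using abc(5) by auto
  then have "(g0 a)\<^sup>2 > 0" by simp
  moreover have "(g0 a)\<^sup>2 < S a a" using g0 unfolding one_factor_def by simp
  ultimately have "t > 0" "t < S a a" using anchor[OF g0] by auto
  have prod: "S i j * t = S i a * S j a" if ij: "i < p" "j < p" "distinct [i, j, a]" for i j
  proof -
    consider "j \<in> {b, c}" | "i \<in> {b, c}" | "distinct [i, j, a, b]" using ij(3) abc(4) by auto
    then show ?thesis
    proof cases
      case 3
      (* A tetrad identity reduces to products involving at most one index outside a, b, c. *)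
      have tet: "S i j * S a b = S i a * S j b"
        using locally_one_factor_tetrad[OF L, of i j a b] ij abc(1,2) 3 by simp
      have "S j b * t = S j a * S b a" using quad[of j j b] ij 3 by simp
      then have "(S i j * t) * S a b = (S i a * S j a) * S a b"
        using tet sym[of a b] abc(1,2) by (metis mult.assoc mult.commute)
      then show ?thesis using abc(5) by simp
    qed (use quad[of i i j] quad[of j i j] ij in auto)
  qed
  have dom: "(S i a)\<^sup>2 < S i i * t" if i: "i < p" "i \<noteq> a" for i
  proof -
    obtain g where g: "one_factor S {a, b, c, i} g"
      using locally_one_factor_list[OF L, of "[a, b, c, i]"] abc i by auto
    have "S i a = g i * g a" using g i unfolding one_factor_def by auto
    then have "(S i a)\<^sup>2 = (g i)\<^sup>2 * t" using anchor[OF g] by (simp add: power_mult_distrib)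
    also have "\<dots> < S i i * t" using g \<open>t > 0\<close> by (simp add: one_factor_def)
    finally show ?thesis .
  qed
  show ?thesis
    using one_factor_anchor[of p S a t, OF sym[OF abc(1)] \<open>t > 0\<close> \<open>t < S a a\<close> prod dom] by blast
qed

(* Second case: S a b is the only nonzero entry in row a; then all off-diagonal entries
   outside the pair {a, b} vanish and any t between (S a b)^2 / S b b and S a a works. *)
lemma global_one_factor_pair:
  assumes L: "locally_one_factor S p"
    and ab: "a < p" "b < p" "a \<noteq> b" "S a b \<noteq> 0"
    and row: "\<And>c. c < p \<Longrightarrow> c \<noteq> a \<Longrightarrow> c \<noteq> b \<Longrightarrow> S a c = 0"
  shows "\<exists>g. one_factor S {..<p} g"
proof -
  have sym: "\<And>x y. x < p \<Longrightarrow> y < p \<Longrightarrow> S x y = S y x"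
    using locally_one_factor_symm[OF L] by blast
  have zero: "S i j = 0" if ij: "i < p" "j < p" "i \<noteq> j" "j \<notin> {a, b}" for i j
  proof -
    obtain g where g: "one_factor S {a, b, i, j} g"
    using locally_one_factor_list[OF L, of "[a, b, i, j]"] ab ij by auto
    have "g a * g j = 0" "g a \<noteq> 0" using g row[of j] ij ab by (auto simp: one_factor_def)
    then show ?thesis using g ij by (auto simp: one_factor_def)
  qed
  have pos: "S a a > 0" "S b b > 0" using locally_one_factor_diag_pos[OF L] ab by auto
  obtain g where g: "one_factor S {a, b} g"
    using locally_one_factor_list[OF L, of "[a, b]"] ab by auto
  have "(S a b)\<^sup>2 = (g a)\<^sup>2 * (g b)\<^sup>2" using g ab by (simp add: one_factor_def power_mult_distrib)
  also have "\<dots> < S a a * S b b"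
    using g by (intro mult_strict_mono') (auto simp: one_factor_def)
  finally have det: "(S a b)\<^sup>2 / S b b < S a a" using pos by (simp add: divide_less_eq mult.commute)
  then obtain t where t: "(S a b)\<^sup>2 / S b b < t" "t < S a a" using dense by blast
  have "t > 0" using t(1) pos(2) by (smt (verit) divide_nonneg_pos zero_le_power2)
  from t(1) have tb: "(S a b)\<^sup>2 < S b b * t" using pos by (simp add: divide_less_eq mult.commute)
  have prod: "S i j * t = S i a * S j a" if ij: "i < p" "j < p" "distinct [i, j, a]" for i j
    using zero[of i j] zero[of j i] zero[of a i] zero[of a j] sym ij ab by (cases "j = b") auto
  have dom: "(S i a)\<^sup>2 < S i i * t" if i: "i < p" "i \<noteq> a" for i
  proof (cases "i = b")
    case True then show ?thesis using tb sym ab by simp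
  next
    case False
    then have "S i a = 0" using zero[of a i] sym i ab by auto
    then show ?thesis using locally_one_factor_diag_pos[OF L i(1)] \<open>t > 0\<close> by simp
  qed
  show ?thesis
    using one_factor_anchor[of p S a t, OF sym[OF ab(1)] \<open>t > 0\<close> \<open>t < S a a\<close> prod dom] by blast
qed

lemma global_one_factor:
  assumes "locally_one_factor S p" "a < p" "b < p" "a \<noteq> b" "S a b \<noteq> 0"
  shows "\<exists>g. one_factor S {..<p} g"
proof (cases "\<exists>c<p. c \<noteq> a \<and> c \<noteq> b \<and> S a c \<noteq> 0")
  case True
  then obtain c where "c < p" "c \<noteq> a" "c \<noteq> b" "S a c \<noteq> 0" by blast
  then show ?thesis using global_one_factor_triangle assms by simp
next
  case False
  then show ?thesis using global_one_factor_pair assms by blast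
qed

lemma principal2_not_F0_iff:
  assumes "pos_def p S"
  shows "(\<exists>idx. principal_idx p 2 idx \<and> \<not> F0 2 (submat S idx)) \<longleftrightarrow>
         (\<exists>i<p. \<exists>j<p. i \<noteq> j \<and> S i j \<noteq> 0)"
proof
  assume "\<exists>idx. principal_idx p 2 idx \<and> \<not> F0 2 (submat S idx)"
  then obtain idx where idx: "principal_idx p 2 idx" "\<not> F0 2 (submat S idx)" by blast
  have lt: "\<forall>r<2. idx r < p" using idx(1) unfolding principal_idx_def by blast
  then have "\<not> is_diag 2 (submat S idx)"
    using idx(2) F0_iff_diag pos_def_diag_pos[OF assms] by (simp add: submat_def)
  then obtain r s where "r < 2" "s < 2" "r \<noteq> s" "S (idx r) (idx s) \<noteq> 0"
    unfolding is_diag_def submat_def by blast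
  then show "\<exists>i<p. \<exists>j<p. i \<noteq> j \<and> S i j \<noteq> 0"
    using lt principal_idx_inj[OF idx(1)] by (metis inj_on_contraD lessThan_iff)
next
  assume "\<exists>i<p. \<exists>j<p. i \<noteq> j \<and> S i j \<noteq> 0"
  then obtain i j where ij: "i < p" "j < p" "i \<noteq> j" "S i j \<noteq> 0" by blast
  let ?idx = "(!) (sorted_list_of_set {i, j})"
  have sub: "finite {i, j}" "{i, j} \<subseteq> {..<p}" and card: "card {i, j} = 2" using ij by auto
  have pi: "principal_idx p 2 ?idx" using principal_idx_sorted_list(1)[OF sub] card by simp
  have img: "?idx ` {..<2} = {i, j}" using principal_idx_sorted_list(2)[OF sub] card by simp
  obtain r where "r < 2" "?idx r = i" using img by (metis imageE insertI1 lessThan_iff)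
  moreover obtain s where "s < 2" "?idx s = j" using img by (metis imageE insertI1 insertI2 lessThan_iff)
  ultimately have "\<not> is_diag 2 (submat S ?idx)" using ij(3,4) unfolding is_diag_def submat_def by metis
  moreover have "\<forall>r<2. ?idx r < p" using pi unfolding principal_idx_def by blast
  ultimately have "\<not> F0 2 (submat S ?idx)"
    using F0_iff_diag pos_def_diag_pos[OF assms] by (simp add: submat_def)
  then show "\<exists>idx. principal_idx p 2 idx \<and> \<not> F0 2 (submat S idx)" using pi by blast
qed

theorem theorem2:
  fixes p :: nat and \<Sigma> :: "nat \<Rightarrow> nat \<Rightarrow> real"
  assumes "p \<ge> 4" and "pos_def p \<Sigma>"
  shows "(Fpm p 1 \<Sigma> \<and> \<not> F0 p \<Sigma>) \<longleftrightarrow>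
    ((\<forall>idx. principal_idx p 4 idx \<longrightarrow> Fpm 4 1 (submat \<Sigma> idx)) \<and>
     (\<exists>idx. principal_idx p 2 idx \<and> \<not> F0 2 (submat \<Sigma> idx)))"
proof -
  have not_F0: "\<not> F0 p \<Sigma> \<longleftrightarrow> (\<exists>i<p. \<exists>j<p. i \<noteq> j \<and> \<Sigma> i j \<noteq> 0)"
    using F0_iff_diag pos_def_diag_pos[OF assms(2)] unfolding is_diag_def by blast
  have "Fpm p 1 \<Sigma>"
    if H: "\<forall>idx. principal_idx p 4 idx \<longrightarrow> Fpm 4 1 (submat \<Sigma> idx)"
      and off: "\<exists>i<p. \<exists>j<p. i \<noteq> j \<and> \<Sigma> i j \<noteq> 0"
  proof -
    have "locally_one_factor \<Sigma> p" using locally_one_factor_from_principal[OF assms(1) H] .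
    then show ?thesis using off global_one_factor Fpm1_iff_one_factor by metis
  qed
  then show ?thesis
    using not_F0 principal2_not_F0_iff[OF assms(2)] Fpm1_principal by blast
qed

end
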